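(* Let $A$ be a finite alphabet, $X\subseteq A^{\mathbb{Z}}$ a subshift, $F\colon X\to X$ a cellular automaton on $X$, and $\mu$ a Borel probability measure on $X$ which is ergodic for $\sigma$. The following are equivalent: (1) there exists a blocking word $B$ for $(X,F)$ such that $\mu([B]_0)>0$; (2) $\mu$ is equicontinuous for $(X,F)$, i.e. the set of equicontinuity points of $(X,F)$ has $\mu$-measure $1$.
   Context: $A^{\mathbb{Z}}$ has the product topology with metric $d(x,y)=2^{-i}$, $i=\min\{|j|:x_j\ne y_j\}$, and shift $\sigma((x_i)_i)=(x_{i+1})_i$. A subshift is a closed $\sigma$-invariant subset of $A^{\mathbb{Z}}$; a cellular automaton on $X$ is a continuous $F\colon X\to X$ commuting with $\sigma$; by the Curtis–Hedlund–Lyndon theorem there is an integer $r\ge 0$ (a radius) and a local map $f$ with $F(x)_i=f(x_{i-r},\dots,x_{i+r})$. For $x\in A^{\mathbb{Z}}$ and $p\le q$, $x(p,q)=x_p\cdots x_q$; for a word $u=u_1\cdots u_{|u|}$ and $t\in\mathbb{Z}$, $[u]_t=\{x\in X: x_{t+j-1}=u_j,\ 1\le j\le |u|\}$. A word $B\in A^{2k+1}$ is a blocking word for $(X,F)$ if there exist an integer $i$ with $2i+1\ge r$ and words $v_n$ of length $2i+1$ ($n\ge 1$) such that for every $x\in X$ with $x(-k,k)=B$ one has $F^n(x)(-i,i)=v_n$ for all $n\ge1$. A point $x\in X$ is an equicontinuity point of $(X,F)$ if for every $\varepsilon>0$ there is $\eta>0$ such that $d(x,y)\le\eta$ implies $d(F^i(x),F^i(y))\le\varepsilon$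 for all $i>0$. *)

theory Defs
  imports "HOL-Analysis.Analysis" "HOL-Probability.Probability"
begin

definition fullshift_top :: "(int \<Rightarrow> 'a) topology" where
  "fullshift_top = product_topology (\<lambda>_. discrete_topology UNIV) UNIV"

definition shift :: "(int \<Rightarrow> 'a) \<Rightarrow> (int \<Rightarrow> 'a)" where
  "shift x = (\<lambda>i. x (i + 1))"

definition cdist :: "(int \<Rightarrow> 'a) \<Rightarrow> (int \<Rightarrow> 'a) \<Rightarrow> real" where
  "cdist x y = (if x = y then 0
     else (1/2) ^ (LEAST n::nat. \<exists>j. \<bar>j\<bar> = int n \<and> x j \<noteq> y j))"

definition subshift :: "(int \<Rightarrow> 'a::finite) set \<Rightarrow> bool" where
  "subshift X \<longleftrightarrow> closedin fullshift_top X \<and> shift ` X = X"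

definition cellular_automaton :: "(int \<Rightarrow> 'a::finite) set \<Rightarrow> ((int \<Rightarrow> 'a) \<Rightarrow> (int \<Rightarrow> 'a)) \<Rightarrow> bool" where
  "cellular_automaton X F \<longleftrightarrow>
     continuous_map (subtopology fullshift_top X) (subtopology fullshift_top X) F \<and>
     (\<forall>x\<in>X. F (shift x) = shift (F x))"

definition is_radius :: "(int \<Rightarrow> 'a) set \<Rightarrow> ((int \<Rightarrow> 'a) \<Rightarrow> (int \<Rightarrow> 'a)) \<Rightarrow> nat \<Rightarrow> bool" where
  "is_radius X F r \<longleftrightarrow> (\<exists>f :: 'a list \<Rightarrow> 'a. \<forall>x\<in>X. \<forall>i.
      F x i = f (map (\<lambda>m. x (i + m)) [- int r..int r]))"

definition cylinder :: "(int \<Rightarrow> 'a) set \<Rightarrow> 'a list \<Rightarrow> int \<Rightarrow> (int \<Rightarrow> 'a) set" where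
  "cylinder X u t = {x \<in> X. \<forall>j < length u. x (t + int j) = u ! j}"

definition window :: "(int \<Rightarrow> 'a) \<Rightarrow> int \<Rightarrow> int \<Rightarrow> 'a list" where
  "window x p q = map x [p..q]"

definition blocking_word :: "(int \<Rightarrow> 'a) set \<Rightarrow> ((int \<Rightarrow> 'a) \<Rightarrow> (int \<Rightarrow> 'a)) \<Rightarrow> 'a list \<Rightarrow> bool" where
  "blocking_word X F B \<longleftrightarrow> (\<exists>k::nat. length B = 2 * k + 1 \<and>
     (\<exists>r. is_radius X F r \<and> (\<exists>i::nat. 2 * i + 1 \<ge> r \<and>
       (\<exists>v :: nat \<Rightarrow> 'a list. (\<forall>n\<ge>1. length (v n) = 2 * i + 1) \<and>
         (\<forall>x\<in>X. window x (- int k) (int k) = B \<longrightarrow>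
            (\<forall>n\<ge>1. window ((F ^^ n) x) (- int i) (int i) = v n))))))"

definition equicontinuity_point :: "(int \<Rightarrow> 'a) set \<Rightarrow> ((int \<Rightarrow> 'a) \<Rightarrow> (int \<Rightarrow> 'a)) \<Rightarrow> (int \<Rightarrow> 'a) \<Rightarrow> bool" where
  "equicontinuity_point X F x \<longleftrightarrow> x \<in> X \<and>
     (\<forall>\<epsilon>>0. \<exists>\<eta>>0. \<forall>y\<in>X. cdist x y \<le> \<eta> \<longrightarrow>
        (\<forall>i>0. cdist ((F ^^ i) x) ((F ^^ i) y) \<le> \<epsilon>))"

definition borel_on :: "(int \<Rightarrow> 'a) set \<Rightarrow> (int \<Rightarrow> 'a) measure" where
  "borel_on X = sigma X {U. openin (subtopology fullshift_top X) U}"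

definition shift_ergodic :: "(int \<Rightarrow> 'a) set \<Rightarrow> (int \<Rightarrow> 'a) measure \<Rightarrow> bool" where
  "shift_ergodic X M \<longleftrightarrow>
     (\<forall>A\<in>sets M. shift -` A \<inter> X \<in> sets M \<and> emeasure M (shift -` A \<inter> X) = emeasure M A) \<and>
     (\<forall>A\<in>sets M. shift -` A \<inter> X = A \<longrightarrow> emeasure M A = 0 \<or> emeasure M A = 1)"

end

theory Submission
  imports Defs
begin

text \<open>
  If a blocking word \<open>B\<close> has a cylinder of positive measure, ergodicity of the shift makes almost
  every point contain occurrences of \<open>B\<close> arbitrarily far to the left and to the right. Two such
  occurrences act as walls: the cells under a wall are forced by the wall alone, and the cells
  between the walls only see cells between or under the walls (the radius is at most the width
  of the forced zone). Hence every point agreeing with \<open>x\<close> on a window containing both walls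
  agrees with \<open>x\<close> between them forever, and \<open>x\<close> is an equicontinuity point.
  Conversely, a large enough central window of an equicontinuity point is a blocking word, so
  the equicontinuity points are covered by countably many cylinders of blocking words, all of
  equal measure by shift invariance; they cannot all be null.
\<close>

definition shift_by :: "int \<Rightarrow> (int \<Rightarrow> 'a) \<Rightarrow> (int \<Rightarrow> 'a)" where
  "shift_by p x = (\<lambda>j. x (j + p))"

lemma shift_by_1: "shift_by 1 = shift"
  by (simp add: fun_eq_iff shift_by_def shift_def)

lemma shift_by_shift_by: "shift_by p (shift_by q x) = shift_by (p + q) x"
  by (simp add: shift_by_def algebra_simps)

lemma subshift_shift_by_closed:
  assumes "subshift X" "x \<in> X"
  shows "shift_by p x \<in> X"
proof (induction p rule: int_induct[where k = 0])
  case base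
  then show ?case using assms(2) by (simp add: shift_by_def)
next
  case (step1 i)
  have "shift_by (i + 1) x = shift (shift_by i x)"
    by (simp add: shift_by_def shift_def algebra_simps)
  then show ?case using step1 assms(1) by (auto simp: subshift_def)
next
  case (step2 i)
  then obtain z where z: "z \<in> X" "shift_by i x = shift z"
    using assms(1) unfolding subshift_def by blast
  have "z = shift_by (-1) (shift z)"
    by (simp add: shift_by_def shift_def)
  then have "z = shift_by (i - 1) x"
    using z(2) shift_by_shift_by[of "-1" i x] by simp
  then show ?case using z(1) by simp
qed

lemma ca_maps_into:
  assumes "cellular_automaton X F" "x \<in> X"
  shows "F x \<in> X"
proof -
  have "topspace (subtopology fullshift_top X) = X"
    by (simp add: fullshift_top_def)
  then show ?thesis
    using assms continuous_map_image_subset_topspace unfolding cellular_automaton_def by blast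
qed

lemma ca_funpow_maps_into:
  "cellular_automaton X F \<Longrightarrow> x \<in> X \<Longrightarrow> (F ^^ n) x \<in> X"
  by (induction n) (auto intro: ca_maps_into)

lemma ca_shift_by_commute:
  assumes "subshift X" "cellular_automaton X F" "x \<in> X"
  shows "F (shift_by p x) = shift_by p (F x)"
proof (induction p rule: int_induct[where k = 0])
  case base
  then show ?case by (simp add: shift_by_def)
next
  case (step1 i)
  have "shift_by (i + 1) z = shift (shift_by i z)" for z :: "int \<Rightarrow> 'a"
    by (simp add: shift_by_def shift_def algebra_simps)
  moreover have "shift_by i x \<in> X" using subshift_shift_by_closed assms by blast
  ultimately show ?case
    using step1 assms(2) unfolding cellular_automaton_def by metis
next
  case (step2 i)
  have x': "shift_by (i - 1) x \<in> X" using subshift_shift_by_closed assms by blast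
  have "shift (shift_by (i - 1) x) = shift_by i x"
    by (simp add: shift_by_def shift_def)
  then have "F (shift_by i x) = shift (F (shift_by (i - 1) x))"
    using assms(2) x' unfolding cellular_automaton_def by metis
  then have "F (shift_by (i - 1) x) = shift_by (-1) (F (shift_by i x))"
    by (simp add: shift_by_def shift_def)
  then show ?case using step2 by (simp add: shift_by_shift_by)
qed

lemma ca_funpow_shift_by_commute:
  assumes "subshift X" "cellular_automaton X F" "x \<in> X"
  shows "(F ^^ n) (shift_by p x) = shift_by p ((F ^^ n) x)"
  by (induction n)
    (simp_all add: ca_shift_by_commute[OF assms(1,2)] ca_funpow_maps_into[OF assms(2,3)])

subsection \<open>Agreement and the metric\<close>

definition agree :: "nat \<Rightarrow> (int \<Rightarrow> 'a) \<Rightarrow> (int \<Rightarrow> 'a) \<Rightarrow> bool" where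
  "agree k x y \<longleftrightarrow> (\<forall>j. \<bar>j\<bar> \<le> int k \<longrightarrow> x j = y j)"

lemma agree_sym: "agree k x y \<Longrightarrow> agree k y x"
  by (auto simp: agree_def)

lemma agree_trans: "agree k x y \<Longrightarrow> agree k y z \<Longrightarrow> agree k x z"
  by (auto simp: agree_def)

lemma agree_mono: "agree k x y \<Longrightarrow> m \<le> k \<Longrightarrow> agree m x y"
  by (auto simp: agree_def)

lemma window_eq_iff_agree:
  "window x (- int k) (int k) = window y (- int k) (int k) \<longleftrightarrow> agree k x y"
  by (auto simp: window_def agree_def abs_le_iff)

lemma length_window_centered [simp]: "length (window x (- int k) (int k)) = 2 * k + 1"
  by (simp add: window_def nat_add_distrib)

lemma cdist_le_iff_agree: "cdist x y \<le> (1/2) ^ (m + 1) \<longleftrightarrow> agree m x y"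
proof (cases "x = y")
  case True
  then show ?thesis by (simp add: cdist_def agree_def)
next
  case False
  define L where "L = (LEAST n::nat. \<exists>j. \<bar>j\<bar> = int n \<and> x j \<noteq> y j)"
  obtain j0 where "x j0 \<noteq> y j0" using False by auto
  then have "\<exists>n::nat. \<exists>j. \<bar>j\<bar> = int n \<and> x j \<noteq> y j" by (intro exI[of _ "nat \<bar>j0\<bar>"]) auto
  from LeastI_ex[OF this] obtain j where j: "\<bar>j\<bar> = int L" "x j \<noteq> y j"
    unfolding L_def by blast
  have L_least: "L \<le> nat \<bar>i\<bar>" if "x i \<noteq> y i" for i
    unfolding L_def using that by (intro Least_le) auto
  have "agree m x y \<longleftrightarrow> m < L"
    using j L_least unfolding agree_def by (force simp: not_le)
  also have "\<dots> \<longleftrightarrow> (1/2::real) ^ L \<le> (1/2) ^ (m + 1)"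
    by (subst power_decreasing_iff) auto
  finally show ?thesis using False by (simp add: cdist_def L_def)
qed

lemma ex_agree_imp_cdist_le:
  assumes "\<epsilon> > 0"
  shows "\<exists>m. \<forall>x y. agree m x y \<longrightarrow> cdist x y \<le> \<epsilon>"
proof -
  obtain m where "(1/2) ^ m < \<epsilon>" using real_arch_pow_inv[of \<epsilon> "1/2"] assms by auto
  moreover have "(1/2::real) ^ (m + 1) \<le> (1/2) ^ m" by (simp add: power_decreasing)
  ultimately show ?thesis using cdist_le_iff_agree by (metis order.trans less_le)
qed

lemma agree_stable_if_equicontinuity_point:
  assumes "equicontinuity_point X F x"
  shows "\<exists>k. \<forall>y\<in>X. agree k x y \<longrightarrow> (\<forall>n>0. agree m ((F ^^ n) x) ((F ^^ n) y))"
proof -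
  have "(1/2::real) ^ (m + 1) > 0" by simp
  then obtain \<eta> where "\<eta> > 0" and \<eta>: "\<forall>y\<in>X. cdist x y \<le> \<eta> \<longrightarrow>
      (\<forall>n>0. cdist ((F ^^ n) x) ((F ^^ n) y) \<le> (1/2) ^ (m + 1))"
    using assms unfolding equicontinuity_point_def by blast
  from ex_agree_imp_cdist_le[OF \<open>\<eta> > 0\<close>]
  obtain k where k: "\<forall>u v :: int \<Rightarrow> 'a. agree k u v \<longrightarrow> cdist u v \<le> \<eta>" ..
  show ?thesis
  proof (intro exI[of _ k] ballI impI allI)
    fix y and n :: nat
    assume "y \<in> X" "agree k x y" "0 < n"
    then have "cdist ((F ^^ n) x) ((F ^^ n) y) \<le> (1/2) ^ (m + 1)"
      using k \<eta> by blast
    then show "agree m ((F ^^ n) x) ((F ^^ n) y)"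
      by (simp only: cdist_le_iff_agree)
  qed
qed

lemma equicontinuity_point_if_agree_stable:
  assumes "x \<in> X"
    and stable: "\<And>m. \<exists>k. \<forall>y\<in>X. agree k x y \<longrightarrow> (\<forall>n>0. agree m ((F ^^ n) x) ((F ^^ n) y))"
  shows "equicontinuity_point X F x"
  unfolding equicontinuity_point_def
proof (intro conjI allI impI)
  fix \<epsilon> :: real
  assume "\<epsilon> > 0"
  from ex_agree_imp_cdist_le[OF this]
  obtain m where m: "\<forall>u v :: int \<Rightarrow> 'a. agree m u v \<longrightarrow> cdist u v \<le> \<epsilon>" ..
  obtain k where k: "\<forall>y\<in>X. agree k x y \<longrightarrow> (\<forall>n>0. agree m ((F ^^ n) x) ((F ^^ n) y))"
    using stable by blast
  show "\<exists>\<eta>>0. \<forall>y\<in>X. cdist x y \<le> \<eta> \<longrightarrow> (\<forall>n>0. cdist ((F ^^ n) x) ((F ^^ n) y) \<le> \<epsilon>)"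
  proof (intro exI[of _ "(1/2) ^ (k + 1)"] conjI ballI impI allI)
    fix y and n :: nat
    assume "y \<in> X" and close: "cdist x y \<le> (1/2) ^ (k + 1)" and "0 < n"
    have "agree k x y" using close by (rule cdist_le_iff_agree[THEN iffD1])
    then have "agree m ((F ^^ n) x) ((F ^^ n) y)"
      using k \<open>y \<in> X\<close> \<open>0 < n\<close> by blast
    then show "cdist ((F ^^ n) x) ((F ^^ n) y) \<le> \<epsilon>"
      using m by blast
  qed simp
qed fact

lemma equicontinuity_point_iff_agree:
  "equicontinuity_point X F x \<longleftrightarrow> x \<in> X \<and>
     (\<forall>m. \<exists>k. \<forall>y\<in>X. agree k x y \<longrightarrow> (\<forall>n>0. agree m ((F ^^ n) x) ((F ^^ n) y)))"
  using agree_stable_if_equicontinuity_point equicontinuity_point_if_agree_stable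
  by (metis equicontinuity_point_def)

lemma topspace_fullshift_top [simp]: "topspace fullshift_top = UNIV"
  by (simp add: fullshift_top_def)

lemma compact_space_fullshift_top: "compact_space (fullshift_top :: (int \<Rightarrow> 'a::finite) topology)"
  by (simp add: fullshift_top_def compact_space_product_topology compact_space_discrete_topology)

lemma openin_fullshift_agree: "openin fullshift_top {y. agree k x y}"
proof -
  have "{y. agree k x y} = PiE UNIV (\<lambda>j. if \<bar>j\<bar> \<le> int k then {x j} else UNIV)"
    by (auto simp: agree_def PiE_def Pi_def split: if_splits)
  moreover have "finite {j. (if \<bar>j\<bar> \<le> int k then {x j} else UNIV) \<noteq> UNIV}"
    by (rule finite_subset[of _ "{- int k..int k}"]) (auto split: if_splits)
  ultimately show ?thesis
    unfolding fullshift_top_def by (simp add: openin_PiE_gen)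
qed

lemma openin_subshift_if_agree_closed:
  assumes "S \<subseteq> X" "\<And>x y. x \<in> S \<Longrightarrow> y \<in> X \<Longrightarrow> agree k x y \<Longrightarrow> y \<in> S"
  shows "openin (subtopology fullshift_top X) S"
proof -
  have "openin fullshift_top (\<Union>x\<in>S. {y. agree k x y})"
    using openin_fullshift_agree by blast
  moreover have "S = (\<Union>x\<in>S. {y. agree k x y}) \<inter> X"
    using assms by (auto simp: agree_def)
  ultimately show ?thesis by (auto simp: openin_subtopology)
qed

lemma sets_borel_on_openin:
  assumes "sets M = sets (borel_on X)" "openin (subtopology fullshift_top X) U"
  shows "U \<in> sets M"
proof -
  have "{U. openin (subtopology fullshift_top X) U} \<subseteq> Pow X"
    using openin_subset by fastforce
  then show ?thesis
    using assms unfolding borel_on_def by auto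
qed

lemma equicontinuity_points_in_sets:
  assumes "sets M = sets (borel_on X)"
  shows "{x. equicontinuity_point X F x} \<in> sets M"
proof -
  define stable where "stable m k =
    {x\<in>X. \<forall>y\<in>X. agree k x y \<longrightarrow> (\<forall>n>0. agree m ((F ^^ n) x) ((F ^^ n) y))}" for m k :: nat
  have "stable m k \<in> sets M" for m k
  proof (intro sets_borel_on_openin[OF assms] openin_subshift_if_agree_closed)
    fix x z
    assume x: "x \<in> stable m k" and z: "z \<in> X" "agree k x z"
    have "agree m ((F ^^ n) z) ((F ^^ n) y)" if "y \<in> X" "agree k z y" "n > 0" for y n
    proof -
      have "agree m ((F ^^ n) x) ((F ^^ n) z)" "agree m ((F ^^ n) x) ((F ^^ n) y)"
        using x z that agree_trans[OF z(2) that(2)] by (auto simp: stable_def)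
      then show ?thesis by (blast intro: agree_trans agree_sym)
    qed
    then show "z \<in> stable m k" using z(1) by (simp add: stable_def)
  qed (auto simp: stable_def)
  moreover have "{x. equicontinuity_point X F x} = (\<Inter>m. \<Union>k. stable m k)"
    unfolding equicontinuity_point_iff_agree stable_def by blast
  ultimately show ?thesis by auto
qed

subsection \<open>The Curtis--Hedlund--Lyndon theorem\<close>

lemma ca_locally_determined:
  assumes "cellular_automaton X F" "x \<in> X"
  obtains k where "\<And>y. y \<in> X \<Longrightarrow> agree k x y \<Longrightarrow> F y 0 = F x 0"
proof -
  have "continuous_map fullshift_top (discrete_topology UNIV) (\<lambda>x. x 0)"
    unfolding fullshift_top_def by (rule continuous_map_product_projection) simp
  then have "continuous_map (subtopology fullshift_top X) (discrete_topology UNIV) (\<lambda>z. F z 0)"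
    using assms(1) continuous_map_compose[of _ _ F] unfolding cellular_automaton_def
    by (auto simp: o_def continuous_map_in_subtopology)
  then have "openin (subtopology fullshift_top X)
      {z \<in> topspace (subtopology fullshift_top X). F z 0 \<in> {F x 0}}"
    by (rule openin_continuous_map_preimage) simp
  then have "openin (subtopology fullshift_top X) {z \<in> X. F z 0 = F x 0}"
    by simp
  then obtain T where T: "openin fullshift_top T" "{z \<in> X. F z 0 = F x 0} = T \<inter> X"
    by (auto simp: openin_subtopology)
  moreover have "x \<in> T" using T(2) assms(2) by blast
  ultimately obtain U where U: "finite {i. U i \<noteq> UNIV}" "x \<in> PiE UNIV U" "PiE UNIV U \<subseteq> T"
    unfolding fullshift_top_def openin_product_topology_alt by auto
  define k where "k = nat (Max (insert 0 (abs ` {i. U i \<noteq> UNIV})))"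
  have k: "\<bar>j\<bar> \<le> int k" if "U j \<noteq> UNIV" for j
    using that U(1) by (auto simp: k_def intro: Max_ge)
  have "y \<in> T" if "agree k x y" for y
  proof -
    have "y j \<in> U j" for j
    proof (cases "U j = UNIV")
      case False
      then have "y j = x j" using k[OF False] that by (auto simp: agree_def)
      then show ?thesis using U(2) by auto
    qed simp
    then show ?thesis using U(3) by auto
  qed
  then show ?thesis using that T(2) assms(2) by blast
qed

lemma ca_uniformly_locally_determined:
  assumes "subshift X" "cellular_automaton X F"
  obtains R where "\<And>x y. x \<in> X \<Longrightarrow> y \<in> X \<Longrightarrow> agree R x y \<Longrightarrow> F y 0 = F x 0"
proof -
  have "\<forall>x\<in>X. \<exists>k. \<forall>y\<in>X. agree k x y \<longrightarrow> F y 0 = F x 0"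
    using ca_locally_determined[OF assms(2)] by metis
  then obtain kx where kx: "\<forall>x\<in>X. \<forall>y\<in>X. agree (kx x) x y \<longrightarrow> F y 0 = F x 0"
    by (rule bchoice[THEN exE])
  define ball where "ball x = {y. agree (kx x) x y}" for x
  have "compactin fullshift_top X"
    using assms(1) unfolding subshift_def by (intro closedin_compact_space[OF compact_space_fullshift_top]) simp
  moreover have "\<forall>U\<in>ball ` X. openin fullshift_top U"
    using openin_fullshift_agree by (auto simp: ball_def)
  moreover have "X \<subseteq> \<Union>(ball ` X)"
    by (auto simp: ball_def agree_def)
  ultimately obtain \<U> where "finite \<U>" "\<U> \<subseteq> ball ` X" "X \<subseteq> \<Union>\<U>"
    unfolding compactin_def by meson
  then obtain C where C: "finite C" "C \<subseteq> X" "X \<subseteq> \<Union>(ball ` C)"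
    by (metis finite_subset_image)
  define R where "R = Max (insert 0 (kx ` C))"
  have "F y 0 = F x 0" if xy: "x \<in> X" "y \<in> X" "agree R x y" for x y
  proof -
    obtain c where c: "c \<in> C" "agree (kx c) c x" using C(3) xy(1) by (auto simp: ball_def)
    have "kx c \<le> R" unfolding R_def using C(1) c(1) by simp
    then have "agree (kx c) c y" using agree_trans[OF c(2)] agree_mono xy(3) by blast
    then show ?thesis using kx c C(2) xy by (metis subsetD)
  qed
  then show ?thesis using that by blast
qed

lemma ca_has_radius:
  assumes "subshift X" "cellular_automaton X F"
  obtains r where "is_radius X F r"
proof -
  obtain R where R: "\<And>x y. x \<in> X \<Longrightarrow> y \<in> X \<Longrightarrow> agree R x y \<Longrightarrow> F y 0 = F x 0"
    using ca_uniformly_locally_determined[OF assms] by blast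
  define f where "f w = F (SOME z. z \<in> X \<and> window z (- int R) (int R) = w) 0" for w
  have "F x i = f (map (\<lambda>m. x (i + m)) [- int R..int R])" if x: "x \<in> X" for x i
  proof -
    let ?w = "map (\<lambda>m. x (i + m)) [- int R..int R]"
    let ?z = "SOME z. z \<in> X \<and> window z (- int R) (int R) = ?w"
    have xi: "shift_by i x \<in> X" by (rule subshift_shift_by_closed[OF assms(1) x])
    have wi: "window (shift_by i x) (- int R) (int R) = ?w"
      by (simp add: window_def shift_by_def add.commute)
    have z: "?z \<in> X \<and> window ?z (- int R) (int R) = ?w"
      using someI[of "\<lambda>z. z \<in> X \<and> window z (- int R) (int R) = ?w" "shift_by i x"] xi wi by blast
    then have "agree R (shift_by i x) ?z"
      using wi window_eq_iff_agree[of "shift_by i x" R ?z] by simp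
    then have "F ?z 0 = F (shift_by i x) 0" using R xi z by blast
    also have "\<dots> = F x i"
      using ca_shift_by_commute[OF assms x] by (simp add: shift_by_def)
    finally show ?thesis by (simp add: f_def)
  qed
  then have "is_radius X F R" unfolding is_radius_def by blast
  then show ?thesis by (rule that)
qed

lemma radius_local:
  assumes "is_radius X F r" "x \<in> X" "y \<in> X"
    and "\<And>m. - int r \<le> m \<Longrightarrow> m \<le> int r \<Longrightarrow> x (j + m) = y (j + m)"
  shows "F x j = F y j"
proof -
  obtain f where f: "\<And>z j. z \<in> X \<Longrightarrow> F z j = f (map (\<lambda>m. z (j + m)) [- int r..int r])"
    using assms(1) unfolding is_radius_def by blast
  have window: "map (\<lambda>m. x (j + m)) [- int r..int r] = map (\<lambda>m. y (j + m)) [- int r..int r]"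
    using assms(4) by simp
  have "F x j = f (map (\<lambda>m. x (j + m)) [- int r..int r])" using f assms(2) by simp
  also have "\<dots> = f (map (\<lambda>m. y (j + m)) [- int r..int r])" using window by (rule arg_cong)
  also have "\<dots> = F y j" using f assms(3) by simp
  finally show ?thesis .
qed

lemma cylinder_subset: "cylinder X u t \<subseteq> X"
  by (auto simp: cylinder_def)

lemma in_cylinder_if_agree_on:
  assumes "x \<in> cylinder X u t" "y \<in> X" "\<And>j. t \<le> j \<Longrightarrow> j < t + int (length u) \<Longrightarrow> x j = y j"
  shows "y \<in> cylinder X u t"
  using assms by (auto simp: cylinder_def)

lemma shift_by_in_cylinder_iff:
  assumes "subshift X" "x \<in> X"
  shows "shift_by p x \<in> cylinder X u t \<longleftrightarrow> x \<in> cylinder X u (t + p)"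
proof -
  have "shift_by p x \<in> cylinder X u t \<longleftrightarrow> (\<forall>j<length u. shift_by p x (t + int j) = u ! j)"
    using subshift_shift_by_closed[OF assms] by (simp add: cylinder_def)
  also have "\<dots> \<longleftrightarrow> x \<in> cylinder X u (t + p)"
    using assms(2) by (simp add: cylinder_def shift_by_def algebra_simps)
  finally show ?thesis .
qed

lemma shift_preimage_cylinder:
  assumes "subshift X"
  shows "shift -` cylinder X u t \<inter> X = cylinder X u (t + 1)"
proof -
  have "x \<in> shift -` cylinder X u t \<inter> X \<longleftrightarrow> x \<in> cylinder X u (t + 1)" for x
    using shift_by_in_cylinder_iff[OF assms, of x 1 u t] cylinder_subset[of X u "t + 1"]
    by (auto simp: shift_by_1)
  then show ?thesis by blast
qed

lemma window_eq_iff_in_cylinder: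
  assumes "length B = 2 * k + 1" "x \<in> X"
  shows "window x (- int k) (int k) = B \<longleftrightarrow> x \<in> cylinder X B (- int k)"
proof -
  have nth: "window x (- int k) (int k) ! j = x (- int k + int j)" if "j < length B" for j
    using that assms(1) by (simp add: window_def)
  have "window x (- int k) (int k) = B \<longleftrightarrow> (\<forall>j<length B. window x (- int k) (int k) ! j = B ! j)"
    using assms(1) by (simp add: list_eq_iff_nth_eq)
  also have "\<dots> \<longleftrightarrow> (\<forall>j<length B. x (- int k + int j) = B ! j)"
    using nth by simp
  also have "\<dots> \<longleftrightarrow> x \<in> cylinder X B (- int k)"
    using assms(2) by (simp add: cylinder_def)
  finally show ?thesis .
qed

lemma cylinder_in_sets:
  assumes "sets M = sets (borel_on X)"
  shows "cylinder X u t \<in> sets M"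
proof (intro sets_borel_on_openin[OF assms] openin_subshift_if_agree_closed)
  fix x y
  assume x: "x \<in> cylinder X u t" and "y \<in> X" and agr: "agree (nat \<bar>t\<bar> + length u) x y"
  show "y \<in> cylinder X u t"
  proof (rule in_cylinder_if_agree_on[OF x \<open>y \<in> X\<close>])
    fix j
    assume "t \<le> j" "j < t + int (length u)"
    then have "\<bar>j\<bar> \<le> int (nat \<bar>t\<bar> + length u)" by linarith
    then show "x j = y j" using agr by (simp add: agree_def)
  qed
qed (rule cylinder_subset)

subsection \<open>Blocking words\<close>

definition shields :: "(int \<Rightarrow> 'a) set \<Rightarrow> ((int \<Rightarrow> 'a) \<Rightarrow> (int \<Rightarrow> 'a)) \<Rightarrow> 'a list \<Rightarrow> nat \<Rightarrow> nat \<Rightarrow> bool"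
  where "shields X F B k i \<longleftrightarrow> (\<forall>z\<in>cylinder X B (- int k). \<forall>w\<in>cylinder X B (- int k).
    \<forall>n\<ge>1. agree i ((F ^^ n) z) ((F ^^ n) w))"

lemma blocking_wordE:
  assumes "blocking_word X F B"
  obtains k r i where "length B = 2 * k + 1" "is_radius X F r" "r \<le> 2 * i + 1" "shields X F B k i"
proof -
  obtain k r i v where k: "length B = 2 * k + 1" and r: "is_radius X F r" "r \<le> 2 * i + 1"
    and v: "\<And>x n. x \<in> X \<Longrightarrow> window x (- int k) (int k) = B \<Longrightarrow> n \<ge> 1 \<Longrightarrow>
      window ((F ^^ n) x) (- int i) (int i) = v n"
    using assms unfolding blocking_word_def by blast
  have "agree i ((F ^^ n) z) ((F ^^ n) w)"
    if zw: "z \<in> cylinder X B (- int k)" "w \<in> cylinder X B (- int k)" and "n \<ge> 1" for z w n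
  proof -
    have "z \<in> X" "w \<in> X" using zw cylinder_subset by blast+
    then have "window z (- int k) (int k) = B" "window w (- int k) (int k) = B"
      using zw by (simp_all add: window_eq_iff_in_cylinder[OF k])
    then have "window ((F ^^ n) z) (- int i) (int i) = window ((F ^^ n) w) (- int i) (int i)"
      using v \<open>n \<ge> 1\<close> \<open>z \<in> X\<close> \<open>w \<in> X\<close> by simp
    then show ?thesis by (simp add: window_eq_iff_agree)
  qed
  then have "shields X F B k i" by (simp add: shields_def)
  with k r that show thesis by blast
qed

lemma blocking_wordI:
  assumes k: "length B = 2 * k + 1" and r: "is_radius X F r" "r \<le> 2 * i + 1"
    and shields: "shields X F B k i"
  shows "blocking_word X F B"
proof -
  define z where "z = (SOME z. z \<in> cylinder X B (- int k))"
  define v where "v n = window ((F ^^ n) z) (- int i) (int i)" for n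
  have "window ((F ^^ n) x) (- int i) (int i) = v n"
    if "x \<in> X" "window x (- int k) (int k) = B" "n \<ge> 1" for x n
  proof -
    have x: "x \<in> cylinder X B (- int k)" using that by (simp add: window_eq_iff_in_cylinder[OF k])
    then have "z \<in> cylinder X B (- int k)"
      using someI[of "\<lambda>z. z \<in> cylinder X B (- int k)"] unfolding z_def by blast
    then have "agree i ((F ^^ n) x) ((F ^^ n) z)"
      using shields x \<open>n \<ge> 1\<close> unfolding shields_def by blast
    then show ?thesis unfolding v_def by (simp add: window_eq_iff_agree)
  qed
  moreover have "length (v n) = 2 * i + 1" for n
    by (simp add: v_def)
  ultimately show ?thesis
    unfolding blocking_word_def using k r by blast
qed

lemma shields_translated:
  assumes "subshift X" "cellular_automaton X F"
    and wall: "shields X F B k i"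
    and xy: "x \<in> cylinder X B (p - int k)" "y \<in> cylinder X B (p - int k)"
    and "n \<ge> 1" "\<bar>j - p\<bar> \<le> int i"
  shows "(F ^^ n) x j = (F ^^ n) y j"
proof -
  have "x \<in> X" "y \<in> X" using xy cylinder_subset by blast+
  then have "shift_by p x \<in> cylinder X B (- int k)" "shift_by p y \<in> cylinder X B (- int k)"
    using xy shift_by_in_cylinder_iff[OF assms(1)] by simp_all
  then have "agree i ((F ^^ n) (shift_by p x)) ((F ^^ n) (shift_by p y))"
    using wall \<open>n \<ge> 1\<close> unfolding shields_def by blast
  then have "agree i (shift_by p ((F ^^ n) x)) (shift_by p ((F ^^ n) y))"
    using ca_funpow_shift_by_commute[OF assms(1,2)] \<open>x \<in> X\<close> \<open>y \<in> X\<close> by simp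
  then have "shift_by p ((F ^^ n) x) (j - p) = shift_by p ((F ^^ n) y) (j - p)"
    using \<open>\<bar>j - p\<bar> \<le> int i\<close> unfolding agree_def by blast
  then show ?thesis by (simp add: shift_by_def)
qed

lemma shields_between_walls:
  assumes ss: "subshift X" and ca: "cellular_automaton X F"
    and "is_radius X F r" "r \<le> 2 * i + 1"
    and wall: "shields X F B k i"
    and left: "x \<in> cylinder X B (q - int k)" "y \<in> cylinder X B (q - int k)"
    and right: "x \<in> cylinder X B (p - int k)" "y \<in> cylinder X B (p - int k)"
    and between: "\<And>j. q - int i \<le> j \<Longrightarrow> j \<le> p + int i \<Longrightarrow> x j = y j"
  shows "q - int i \<le> j \<Longrightarrow> j \<le> p + int i \<Longrightarrow> (F ^^ n) x j = (F ^^ n) y j"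
proof (induction n arbitrary: j)
  case 0
  then show ?case using between by simp
next
  case (Suc n)
  have "x \<in> X" "y \<in> X" using left cylinder_subset by blast+
  consider "\<bar>j - p\<bar> \<le> int i" | "\<bar>j - q\<bar> \<le> int i" | "q + int i < j" "j < p - int i"
    using Suc.prems by linarith
  then show ?case
  proof cases
    case 1
    then show ?thesis using shields_translated[OF ss ca wall right, of "Suc n" j] by simp
  next
    case 2
    then show ?thesis using shields_translated[OF ss ca wall left, of "Suc n" j] by simp
  next
    case 3
    \<comment> \<open>Since \<open>r \<le> 2 * i + 1\<close>, the radius-\<open>r\<close> neighbourhood of \<open>j\<close> stays between the walls.\<close>
    have "(F ^^ n) x (j + m) = (F ^^ n) y (j + m)" if "- int r \<le> m" "m \<le> int r" for m
      using that 3 \<open>r \<le> 2 * i + 1\<close> by (intro Suc.IH) auto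
    then show ?thesis
      using radius_local[OF \<open>is_radius X F r\<close>] ca_funpow_maps_into[OF ca] \<open>x \<in> X\<close> \<open>y \<in> X\<close>
      by simp
  qed
qed

lemma agree_stable_between_walls:
  assumes ss: "subshift X" and ca: "cellular_automaton X F"
    and k: "length B = 2 * k + 1" and rad: "is_radius X F r" "r \<le> 2 * i + 1"
    and wall: "shields X F B k i"
    and p: "p \<ge> int m" "x \<in> cylinder X B (p - int k)"
    and q: "q \<le> - int m" "x \<in> cylinder X B (q - int k)"
  shows "\<exists>K. \<forall>y\<in>X. agree K x y \<longrightarrow> (\<forall>n. agree m ((F ^^ n) x) ((F ^^ n) y))"
proof -
  define K where "K = nat p + nat (- q) + i + k"
  have K: "int K = p - q + int i + int k"
    using p(1) q(1) by (simp add: K_def)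
  have "agree m ((F ^^ n) x) ((F ^^ n) y)" if "y \<in> X" "agree K x y" for y n
  proof -
    have near: "x j = y j" if "q - int i - int k \<le> j" "j \<le> p + int i + int k" for j
    proof -
      have "\<bar>j\<bar> \<le> int K" using that p(1) q(1) unfolding K by linarith
      then show ?thesis using \<open>agree K x y\<close> unfolding agree_def by blast
    qed
    have yp: "y \<in> cylinder X B (p - int k)"
      by (rule in_cylinder_if_agree_on[OF p(2) \<open>y \<in> X\<close>]) (use k p(1) q(1) in \<open>auto intro: near\<close>)
    have yq: "y \<in> cylinder X B (q - int k)"
      by (rule in_cylinder_if_agree_on[OF q(2) \<open>y \<in> X\<close>]) (use k p(1) q(1) in \<open>auto intro: near\<close>)
    have "(F ^^ n) x j = (F ^^ n) y j" if "\<bar>j\<bar> \<le> int m" for j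
      using shields_between_walls[OF ss ca rad wall q(2) yq p(2) yp, of j n] near that p(1) q(1)
      by (simp add: abs_le_iff)
    then show ?thesis by (simp add: agree_def)
  qed
  then show ?thesis by blast
qed

lemma equicontinuity_point_if_blocking_word_recurs:
  assumes ss: "subshift X" and ca: "cellular_automaton X F"
    and "blocking_word X F B" "x \<in> X"
    and future: "\<forall>N. \<exists>t\<ge>N. x \<in> cylinder X B t"
    and past: "\<forall>N. \<exists>t\<le>N. x \<in> cylinder X B t"
  shows "equicontinuity_point X F x"
proof (rule equicontinuity_point_if_agree_stable[OF \<open>x \<in> X\<close>])
  fix m
  obtain k r i where k: "length B = 2 * k + 1" and rad: "is_radius X F r" "r \<le> 2 * i + 1"
    and wall: "shields X F B k i"
    using \<open>blocking_word X F B\<close> by (rule blocking_wordE)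
  obtain t where t: "t \<ge> int m - int k" "x \<in> cylinder X B t" using future by blast
  obtain s where s: "s \<le> - int m - int k" "x \<in> cylinder X B s" using past by blast
  have "t + int k \<ge> int m" "x \<in> cylinder X B (t + int k - int k)"
    "s + int k \<le> - int m" "x \<in> cylinder X B (s + int k - int k)"
    using t s by simp_all
  then have "\<exists>K. \<forall>y\<in>X. agree K x y \<longrightarrow> (\<forall>n. agree m ((F ^^ n) x) ((F ^^ n) y))"
    by (rule agree_stable_between_walls[OF ss ca k rad wall])
  then show "\<exists>K. \<forall>y\<in>X. agree K x y \<longrightarrow> (\<forall>n>0. agree m ((F ^^ n) x) ((F ^^ n) y))"
    by blast
qed

lemma blocking_word_at_equicontinuity_point:
  assumes "subshift X" "cellular_automaton X F" "equicontinuity_point X F x"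
  obtains k where "blocking_word X F (window x (- int k) (int k))"
    "x \<in> cylinder X (window x (- int k) (int k)) (- int k)"
proof -
  obtain r where r: "is_radius X F r" using ca_has_radius[OF assms(1,2)] .
  obtain k where k: "\<And>y n. y \<in> X \<Longrightarrow> agree k x y \<Longrightarrow> n > 0 \<Longrightarrow> agree r ((F ^^ n) x) ((F ^^ n) y)"
    using assms(3) unfolding equicontinuity_point_iff_agree by blast
  define B where "B = window x (- int k) (int k)"
  have len: "length B = 2 * k + 1" by (simp add: B_def)
  have x: "x \<in> X" using assms(3) by (simp add: equicontinuity_point_def)
  have "agree r ((F ^^ n) z) ((F ^^ n) w)"
    if zw: "z \<in> cylinder X B (- int k)" "w \<in> cylinder X B (- int k)" and "n \<ge> 1" for z w n
  proof -
    have "z \<in> X" "w \<in> X" using zw cylinder_subset by blast+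
    then have "window z (- int k) (int k) = B" "window w (- int k) (int k) = B"
      using zw by (simp_all add: window_eq_iff_in_cylinder[OF len])
    then have "agree k x z" "agree k x w"
      unfolding B_def by (simp_all add: window_eq_iff_agree[symmetric])
    then show ?thesis
      using k \<open>z \<in> X\<close> \<open>w \<in> X\<close> \<open>n \<ge> 1\<close> by (meson agree_sym agree_trans less_le_trans zero_less_one)
  qed
  then have "shields X F B k r" unfolding shields_def by blast
  have "blocking_word X F B"
    by (rule blocking_wordI[OF len r _ \<open>shields X F B k r\<close>]) simp
  moreover have "x \<in> cylinder X B (- int k)"
    using window_eq_iff_in_cylinder[OF len x] by (simp add: B_def)
  ultimately show ?thesis using that by (simp add: B_def)
qed

subsection \<open>Recurrence under an ergodic shift\<close>

lemma shift_invariant_emeasure_eq: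
  fixes A :: "int \<Rightarrow> (int \<Rightarrow> 'a) set" and s t :: int
  assumes "shift_ergodic X M" "\<And>t. A t \<in> sets M" "\<And>t. shift -` A t \<inter> X = A (t + 1)"
  shows "emeasure M (A s) = emeasure M (A t)"
proof -
  have step: "emeasure M (A (u + 1)) = emeasure M (A u)" for u
    using assms unfolding shift_ergodic_def by metis
  show ?thesis
  proof (induction s rule: int_induct[where k = t])
    case (step1 i)
    then show ?case using step by simp
  next
    case (step2 i)
    then show ?case using step[of "i - 1"] by simp
  qed simp
qed

lemma INT_surj_reindex: "surj f \<Longrightarrow> (\<Inter>x. A (f x)) = (\<Inter>y. A y)"
proof -
  assume "surj f"
  have "(\<Inter>x. A (f x)) = \<Inter>(A ` range f)" by (simp add: image_image)
  then show ?thesis using \<open>surj f\<close> by simp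
qed

lemma emeasure_INT_antimono_const:
  fixes V :: "int \<Rightarrow> 'a set"
  assumes "finite_measure M" "\<And>t. V t \<in> sets M" "antimono V" "\<And>t. emeasure M (V t) = c"
  shows "emeasure M (\<Inter>t. V t) = c"
proof -
  have "(\<Inter>t. V t) = (\<Inter>n. V (int n))"
  proof (intro equalityI INT_greatest)
    fix t
    have "V (int (nat t)) \<subseteq> V t" using \<open>antimono V\<close> by (simp add: antimono_def)
    then show "(\<Inter>n. V (int n)) \<subseteq> V t" by blast
  qed blast
  moreover have "(\<lambda>n. emeasure M (V (int n))) \<longlonglongrightarrow> emeasure M (\<Inter>n. V (int n))"
    using assms by (intro Lim_emeasure_decseq) (auto simp: decseq_def antimono_def finite_measure.emeasure_finite)
  ultimately show ?thesis
    using assms(4) by (simp add: LIMSEQ_const_iff)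
qed

lemma shift_ergodic_AE_INT:
  fixes V :: "int \<Rightarrow> (int \<Rightarrow> 'a) set"
  assumes "prob_space M" "shift_ergodic X M"
    and sets: "\<And>t. V t \<in> sets M" and shift: "\<And>t. shift -` V t \<inter> X = V (t + 1)"
    and "mono V \<or> antimono V" "emeasure M (V s) > 0"
  shows "AE x in M. \<forall>t. x \<in> V t"
proof -
  have const: "emeasure M (V t) = emeasure M (V s)" for t
    using assms(2) sets shift by (rule shift_invariant_emeasure_eq)
  have fin: "finite_measure M" using assms(1) by (simp add: prob_space_def)
  have "emeasure M (\<Inter>t. V t) = emeasure M (V s)"
  proof (cases "antimono V")
    case True
    then show ?thesis using emeasure_INT_antimono_const[of M V, OF fin sets _ const] by blast
  next
    case False
    then have "mono V" using \<open>mono V \<or> antimono V\<close> by blast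
    then have "antimono (\<lambda>t. V (- t))" by (intro antimonoI monoD[OF \<open>mono V\<close>]) simp
    moreover have "(\<Inter>t. V (- t)) = (\<Inter>t. V t)"
      by (rule INT_surj_reindex) simp
    ultimately show ?thesis
      using emeasure_INT_antimono_const[of M "\<lambda>t. V (- t)"] fin sets const by simp
  qed
  then have "emeasure M (\<Inter>t. V t) \<noteq> 0" using \<open>emeasure M (V s) > 0\<close> by simp
  moreover have G: "(\<Inter>t. V t) \<in> sets M" using sets by blast
  moreover have "shift -` (\<Inter>t. V t) \<inter> X = (\<Inter>t. V t)"
  proof -
    have "shift -` (\<Inter>t. V t) \<inter> X = (\<Inter>t. shift -` V t \<inter> X)" by blast
    also have "\<dots> = (\<Inter>t. V (t + 1))" by (simp add: shift)
    also have "\<dots> = (\<Inter>t. V t)"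
      by (rule INT_surj_reindex) simp
    finally show ?thesis .
  qed
  ultimately have "emeasure M (\<Inter>t. V t) = 1"
    using assms(2) unfolding shift_ergodic_def by blast
  then show ?thesis
    using prob_space.AE_in_set_eq_1[OF assms(1) G] by (simp add: measure_def)
qed

lemma shift_ergodic_recurrence:
  fixes A :: "int \<Rightarrow> (int \<Rightarrow> 'a) set"
  assumes "prob_space M" "shift_ergodic X M"
    and sets: "\<And>t. A t \<in> sets M" and shift: "\<And>t. shift -` A t \<inter> X = A (t + 1)"
    and "emeasure M (A t0) > 0"
  shows "AE x in M. (\<forall>N. \<exists>t\<ge>N. x \<in> A t) \<and> (\<forall>N. \<exists>t\<le>N. x \<in> A t)"
proof -
  have preimage: "shift -` (\<Union>t\<in>S. A t) \<inter> X = (\<Union>t\<in>(\<lambda>t. t + 1) ` S. A t)" for S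
  proof -
    have "shift -` (\<Union>t\<in>S. A t) \<inter> X = (\<Union>t\<in>S. shift -` A t \<inter> X)" by blast
    then show ?thesis by (simp add: shift)
  qed
  have image_succ: "(\<lambda>t. t + 1) ` {N..} = {N + 1..}" "(\<lambda>t. t + 1) ` {..N} = {..N + 1}" for N :: int
    using image_add_atLeast[of 1 N] image_add_atMost[of 1 N] by (simp_all add: add.commute)
  have union_sets: "(\<Union>t\<in>S. A t) \<in> sets M" for S
    using sets by (intro sets.countable_UN'') auto
  have pos: "emeasure M (\<Union>t\<in>S. A t) > 0" if "t0 \<in> S" for S
  proof -
    have "emeasure M (A t0) \<le> emeasure M (\<Union>t\<in>S. A t)"
      using that union_sets by (intro emeasure_mono) auto
    then show ?thesis using \<open>emeasure M (A t0) > 0\<close> by simp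
  qed
  have "AE x in M. \<forall>N. x \<in> (\<Union>t\<in>{N..}. A t)"
  proof (rule shift_ergodic_AE_INT[OF assms(1,2), where s = t0])
    show "shift -` (\<Union>t\<in>{N..}. A t) \<inter> X = (\<Union>t\<in>{N + 1..}. A t)" for N
      unfolding preimage image_succ ..
    show "mono (\<lambda>N. \<Union>t\<in>{N..}. A t) \<or> antimono (\<lambda>N. \<Union>t\<in>{N..}. A t)"
      by (intro disjI2 antimonoI UN_mono) auto
  qed (use union_sets pos in auto)
  moreover have "AE x in M. \<forall>N. x \<in> (\<Union>t\<in>{..N}. A t)"
  proof (rule shift_ergodic_AE_INT[OF assms(1,2), where s = t0])
    show "shift -` (\<Union>t\<in>{..N}. A t) \<inter> X = (\<Union>t\<in>{..N + 1}. A t)" for N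
      unfolding preimage image_succ ..
    show "mono (\<lambda>N. \<Union>t\<in>{..N}. A t) \<or> antimono (\<lambda>N. \<Union>t\<in>{..N}. A t)"
      by (intro disjI1 monoI UN_mono) auto
  qed (use union_sets pos in auto)
  ultimately show ?thesis by eventually_elim auto
qed

lemma AE_equicontinuity_point_if_blocking_cylinder_pos:
  assumes "subshift X" "cellular_automaton X F" "prob_space M" "sets M = sets (borel_on X)"
    and "space M = X" "shift_ergodic X M"
    and "blocking_word X F B" "emeasure M (cylinder X B 0) > 0"
  shows "AE x in M. equicontinuity_point X F x"
proof -
  have "AE x in M. (\<forall>N. \<exists>t\<ge>N. x \<in> cylinder X B t) \<and> (\<forall>N. \<exists>t\<le>N. x \<in> cylinder X B t)"
    using assms(3,6) cylinder_in_sets[OF assms(4)] shift_preimage_cylinder[OF assms(1)] assms(8)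
    by (rule shift_ergodic_recurrence)
  with AE_space show ?thesis
  proof eventually_elim
    case (elim x)
    then show ?case using assms(5)
      by (intro equicontinuity_point_if_blocking_word_recurs[OF assms(1,2,7)]) auto
  qed
qed

lemma blocking_cylinder_pos_if_equicontinuity_points_not_null:
  assumes "subshift X" "cellular_automaton X F" "sets M = sets (borel_on X)" "shift_ergodic X M"
    and "emeasure M {x. equicontinuity_point X F x} \<noteq> 0"
  obtains B where "blocking_word X F B" "emeasure M (cylinder X B 0) > 0"
proof (rule ccontr)
  assume none: "\<not> thesis"
  note found = that
  note cyl = cylinder_in_sets[OF assms(3)]
  have "cylinder X B t \<in> null_sets M" if B: "blocking_word X F B" for B t
  proof (rule null_setsI)
    have "emeasure M (cylinder X B t) = emeasure M (cylinder X B 0)"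
      using assms(4) cyl shift_preimage_cylinder[OF assms(1)] by (rule shift_invariant_emeasure_eq)
    also have "\<dots> = 0" using none found B by (metis not_gr_zero)
    finally show "emeasure M (cylinder X B t) = 0" .
  qed (rule cyl)
  then have "(\<Union>B\<in>{B. blocking_word X F B}. \<Union>t. cylinder X B t) \<in> null_sets M"
    by (intro null_sets_UN' null_sets_UN) auto
  moreover have "{x. equicontinuity_point X F x} \<subseteq> (\<Union>B\<in>{B. blocking_word X F B}. \<Union>t. cylinder X B t)"
  proof
    fix x
    assume "x \<in> {x. equicontinuity_point X F x}"
    then obtain k where "blocking_word X F (window x (- int k) (int k))"
      "x \<in> cylinder X (window x (- int k) (int k)) (- int k)"
      using blocking_word_at_equicontinuity_point[OF assms(1,2)] by blast
    then show "x \<in> (\<Union>B\<in>{B. blocking_word X F B}. \<Union>t. cylinder X B t)" by blast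
  qed
  ultimately have "{x. equicontinuity_point X F x} \<in> null_sets M"
    by (rule null_sets_subset[OF _ equicontinuity_points_in_sets[OF assms(3)]])
  then show False using assms(5) by (simp add: null_setsD1)
qed

theorem mainTheorem3:
  fixes X :: "(int \<Rightarrow> 'a::finite) set"
    and F :: "(int \<Rightarrow> 'a) \<Rightarrow> (int \<Rightarrow> 'a)"
    and M :: "(int \<Rightarrow> 'a) measure"
  assumes "subshift X"
    and "cellular_automaton X F"
    and "prob_space M"
    and "sets M = sets (borel_on X)"
    and "space M = X"
    and "shift_ergodic X M"
  shows "(\<exists>B. blocking_word X F B \<and> emeasure M (cylinder X B 0) > 0) \<longleftrightarrow>
         ({x. equicontinuity_point X F x} \<in> sets M \<and>
          emeasure M {x. equicontinuity_point X F x} = 1)"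
proof -
  let ?E = "{x. equicontinuity_point X F x}"
  have E: "?E \<in> sets M" by (rule equicontinuity_points_in_sets[OF assms(4)])
  show ?thesis
  proof
    assume "\<exists>B. blocking_word X F B \<and> emeasure M (cylinder X B 0) > 0"
    then have "AE x in M. equicontinuity_point X F x"
      using AE_equicontinuity_point_if_blocking_cylinder_pos[OF assms] by blast
    then show "?E \<in> sets M \<and> emeasure M ?E = 1"
      using prob_space.emeasure_eq_1_AE[OF assms(3) E] E by simp
  next
    assume "?E \<in> sets M \<and> emeasure M ?E = 1"
    then have "emeasure M ?E \<noteq> 0" by simp
    then show "\<exists>B. blocking_word X F B \<and> emeasure M (cylinder X B 0) > 0"
      using blocking_cylinder_pos_if_equicontinuity_points_not_null[OF assms(1,2,4,6)] by blast
  qed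
qed

end
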